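(* Let $\succcurlyeq$ be a preference relation on the set $\mathcal{B}$ of bets over a propositional language $\mathcal{L}$. The following are equivalent: (1) $\succcurlyeq$ satisfies Non-Triviality and Objective Expected Utility; (2) $\succcurlyeq$ is represented by a subjective model of uncertainty $(\Omega,t,\lambda)$ with $\lambda$ additive.
   Context: Let $\mathbb{P}$ be a set of propositional variables containing two distinguished propositions $\mathbf{T}$ ("true") and $\mathbf{F}$ ("false"), and let $\mathcal{L}=\mathcal{L}(\mathbb{P})$ be the language generated from $\mathbb{P}$ by $\neg,\land,\lor$. A bet is a function $b:\mathcal{L}\to[0,1]$ with finite support $\mathrm{supp}(b)=\{\phi: b(\phi)>0\}$ and $\sum_{\phi\in\mathrm{supp}(b)} b(\phi)=1$; the primitive bet $b_\phi$ assigns $1$ to $\phi$ and $0$ elsewhere. The set $\mathcal{B}$ of bets is a mixture space under pointwise mixtures. $\succcurlyeq$ is a binary relation on $\mathcal{B}$ with symmetric part $\sim$ and asymmetric part $\succ$. For a set $\Omega$, a truth valuation is a map $t:\mathcal{L}\to 2^\Omega$ with $t(\mathbf{T})=\Omega$, $t(\mathbf{F})=\emptyset$. For a field of sets $\Sigma\subseteq 2^\Omega$, a likelihood appraisal is a map $\lambda:\Sigma\to[0,1]$ with $\lambda(\emptyset)=0$, $\lambda(\Omega)=1$; it is additive if $\lambda(A\cup B)=\lambda(A)+\lambda(B)$ whenever $A,B\in\Sigma$ are disjoint. A subjective model of uncertainty is a triple $(\Omega,t,\lambda)$ with $t$ a truth valuation and $\lambda$ a likelihood appraisal on a field $\Sigma\supseteq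 t(\mathcal{L})$. It represents $\succcurlyeq$ if for all $b,b'\in\mathcal{B}$: $b\succcurlyeq b'$ iff $\sum_{\phi\in\mathrm{supp}(b)} b(\phi)\lambda(t(\phi))\ge \sum_{\phi\in\mathrm{supp}(b')} b'(\phi)\lambda(t(\phi))$. Non-Triviality: $b_{\mathbf{T}}\succcurlyeq b_\phi\succcurlyeq b_{\mathbf{F}}$ for all $\phi\in\mathcal{L}$, and $b_{\mathbf{T}}\succ b_{\mathbf{F}}$. Objective Expected Utility: $\succcurlyeq$ is complete and transitive and satisfies the Archimedean (continuity) axiom and the Independence axiom with respect to mixtures in $\mathcal{B}$. *)

theory Defs
  imports "HOL-Analysis.Analysis"
begin

datatype 'p form = Prop 'p | Neg "'p form" | Conj "'p form" "'p form" | Disj "'p form" "'p form"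

type_synonym 'p bet = "'p form \<Rightarrow> real"

definition supp :: "'p bet \<Rightarrow> 'p form set" where
  "supp b = {\<phi>. b \<phi> > 0}"

definition is_bet :: "'p bet \<Rightarrow> bool" where
  "is_bet b \<longleftrightarrow> (\<forall>\<phi>. 0 \<le> b \<phi> \<and> b \<phi> \<le> 1) \<and> finite (supp b) \<and> (\<Sum>\<phi>\<in>supp b. b \<phi>) = 1"

definition bets :: "'p bet set" where
  "bets = {b. is_bet b}"

definition prim :: "'p form \<Rightarrow> 'p bet" where
  "prim \<phi> = (\<lambda>\<psi>. if \<psi> = \<phi> then 1 else 0)"

definition mix :: "real \<Rightarrow> 'p bet \<Rightarrow> 'p bet \<Rightarrow> 'p bet" where
  "mix \<alpha> b b' = (\<lambda>\<phi>. \<alpha> * b \<phi> + (1 - \<alpha>) * b' \<phi>)"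

definition strict :: "('p bet \<Rightarrow> 'p bet \<Rightarrow> bool) \<Rightarrow> 'p bet \<Rightarrow> 'p bet \<Rightarrow> bool" where
  "strict R b b' \<longleftrightarrow> R b b' \<and> \<not> R b' b"

text \<open>Non-Triviality; tT and tF are the distinguished propositional variables T and F.\<close>
definition non_triviality :: "'p \<Rightarrow> 'p \<Rightarrow> ('p bet \<Rightarrow> 'p bet \<Rightarrow> bool) \<Rightarrow> bool" where
  "non_triviality tT tF R \<longleftrightarrow>
     (\<forall>\<phi>. R (prim (Prop tT)) (prim \<phi>) \<and> R (prim \<phi>) (prim (Prop tF)))
     \<and> strict R (prim (Prop tT)) (prim (Prop tF))"

definition complete_on_bets :: "('p bet \<Rightarrow> 'p bet \<Rightarrow> bool) \<Rightarrow> bool" where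
  "complete_on_bets R \<longleftrightarrow> (\<forall>b\<in>bets. \<forall>b'\<in>bets. R b b' \<or> R b' b)"

definition transitive_on_bets :: "('p bet \<Rightarrow> 'p bet \<Rightarrow> bool) \<Rightarrow> bool" where
  "transitive_on_bets R \<longleftrightarrow>
     (\<forall>b\<in>bets. \<forall>b'\<in>bets. \<forall>b''\<in>bets. R b b' \<and> R b' b'' \<longrightarrow> R b b'')"

definition archimedean :: "('p bet \<Rightarrow> 'p bet \<Rightarrow> bool) \<Rightarrow> bool" where
  "archimedean R \<longleftrightarrow>
     (\<forall>b\<in>bets. \<forall>b'\<in>bets. \<forall>b''\<in>bets. strict R b b' \<and> strict R b' b'' \<longrightarrow>
        (\<exists>\<alpha>\<in>{0<..<1}. \<exists>\<beta>\<in>{0<..<1}.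
            strict R (mix \<alpha> b b'') b' \<and> strict R b' (mix \<beta> b b'')))"

definition independence :: "('p bet \<Rightarrow> 'p bet \<Rightarrow> bool) \<Rightarrow> bool" where
  "independence R \<longleftrightarrow>
     (\<forall>b\<in>bets. \<forall>b'\<in>bets. \<forall>b''\<in>bets. \<forall>\<alpha>\<in>{0<..1}.
        strict R b b' \<longrightarrow> strict R (mix \<alpha> b b'') (mix \<alpha> b' b''))"

definition objective_EU :: "('p bet \<Rightarrow> 'p bet \<Rightarrow> bool) \<Rightarrow> bool" where
  "objective_EU R \<longleftrightarrow> complete_on_bets R \<and> transitive_on_bets R \<and> archimedean R \<and> independence R"

definition truth_valuation :: "'p \<Rightarrow> 'p \<Rightarrow> 'w set \<Rightarrow> ('p form \<Rightarrow> 'w set) \<Rightarrow> bool" where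
  "truth_valuation tT tF \<Omega> t \<longleftrightarrow>
     (\<forall>\<phi>. t \<phi> \<subseteq> \<Omega>) \<and> t (Prop tT) = \<Omega> \<and> t (Prop tF) = {}"

definition likelihood_appraisal :: "'w set \<Rightarrow> 'w set set \<Rightarrow> ('w set \<Rightarrow> real) \<Rightarrow> bool" where
  "likelihood_appraisal \<Omega> \<Sigma> lk \<longleftrightarrow>
     (\<forall>A\<in>\<Sigma>. 0 \<le> lk A \<and> lk A \<le> 1) \<and> lk {} = 0 \<and> lk \<Omega> = 1"

definition additive_on :: "'w set set \<Rightarrow> ('w set \<Rightarrow> real) \<Rightarrow> bool" where
  "additive_on \<Sigma> lk \<longleftrightarrow>
     (\<forall>A\<in>\<Sigma>. \<forall>B\<in>\<Sigma>. A \<inter> B = {} \<longrightarrow> lk (A \<union> B) = lk A + lk B)"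

definition subjective_model ::
  "'p \<Rightarrow> 'p \<Rightarrow> 'w set \<Rightarrow> ('p form \<Rightarrow> 'w set) \<Rightarrow> 'w set set \<Rightarrow> ('w set \<Rightarrow> real) \<Rightarrow> bool" where
  "subjective_model tT tF \<Omega> t \<Sigma> lk \<longleftrightarrow>
     truth_valuation tT tF \<Omega> t \<and> algebra \<Omega> \<Sigma> \<and> range t \<subseteq> \<Sigma> \<and> likelihood_appraisal \<Omega> \<Sigma> lk"

definition represents ::
  "('p form \<Rightarrow> 'w set) \<Rightarrow> ('w set \<Rightarrow> real) \<Rightarrow> ('p bet \<Rightarrow> 'p bet \<Rightarrow> bool) \<Rightarrow> bool" where
  "represents t lk R \<longleftrightarrow>
     (\<forall>b\<in>bets. \<forall>b'\<in>bets. R b b' \<longleftrightarrow>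
        (\<Sum>\<phi>\<in>supp b. b \<phi> * lk (t \<phi>)) \<ge> (\<Sum>\<phi>\<in>supp b'. b' \<phi> * lk (t \<phi>)))"

definition additive_subjective_rep ::
  "'p \<Rightarrow> 'p \<Rightarrow> 'w set \<Rightarrow> ('p bet \<Rightarrow> 'p bet \<Rightarrow> bool) \<Rightarrow> bool" where
  "additive_subjective_rep tT tF \<Omega> R \<longleftrightarrow>
     (\<exists>t \<Sigma> lk. subjective_model tT tF \<Omega> t \<Sigma> lk \<and> additive_on \<Sigma> lk \<and> represents t lk R)"

end

theory Submission
  imports Defs
begin

(* A representation makes the preference the order induced by the linear functional
   b \<mapsto> \<Sum> b \<phi> \<lambda>(t \<phi>) on the mixture space of bets, and such an order is complete,
   transitive, Archimedean and independent.

   Conversely, follow von Neumann and Morgenstern: by the Archimedean axiom every bet between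
   T and F is indifferent to a standard bet mix \<alpha> T F, with \<alpha> found as a supremum;
   this calibrates a utility u \<phi> \<in> [0,1] for each primitive bet. Independence lets
   indifferent bets be substituted inside mixtures, so induction on the support shows that
   each bet b is indifferent to the standard bet with weight EU u b. Finally u is realised as
   an additive likelihood: Lebesgue measure on [0,1), with \<phi> true on [0, u \<phi>). *)

section \<open>Bets and expected utility\<close>

lemma bet_nonneg: "b \<in> bets \<Longrightarrow> 0 \<le> b \<phi>"
  and bet_le_1: "b \<in> bets \<Longrightarrow> b \<phi> \<le> 1"
  and finite_supp_bet: "b \<in> bets \<Longrightarrow> finite (supp b)"
  and sum_supp_bet: "b \<in> bets \<Longrightarrow> sum b (supp b) = 1"
  by (auto simp: bets_def is_bet_def)

lemma bet_eq_0_outside_supp: "b \<in> bets \<Longrightarrow> \<phi> \<notin> supp b \<Longrightarrow> b \<phi> = 0"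
  using bet_nonneg[of b \<phi>] by (auto simp: supp_def)

lemma supp_prim [simp]: "supp (prim \<phi>) = {\<phi>}"
  by (auto simp: supp_def prim_def)

lemma prim_in_bets [simp]: "prim \<phi> \<in> bets"
  by (auto simp: bets_def is_bet_def) (auto simp: prim_def)

lemma bet_eq_prim_if_supp_singleton:
  assumes b: "b \<in> bets" and supp: "supp b = {\<phi>}"
  shows "b = prim \<phi>"
proof
  fix \<psi>
  have "b \<phi> = 1" using sum_supp_bet[OF b] supp by simp
  then show "b \<psi> = prim \<phi> \<psi>"
    using bet_eq_0_outside_supp[OF b, of \<psi>] supp by (auto simp: prim_def)
qed

lemma supp_mix_subset:
  assumes "b \<in> bets" "b' \<in> bets"
  shows "supp (mix a b b') \<subseteq> supp b \<union> supp b'"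
proof
  fix \<phi> assume "\<phi> \<in> supp (mix a b b')"
  then have "b \<phi> \<noteq> 0 \<or> b' \<phi> \<noteq> 0" by (auto simp: supp_def mix_def)
  then show "\<phi> \<in> supp b \<union> supp b'" using bet_eq_0_outside_supp assms by blast
qed

lemma mix_same [simp]: "mix a x x = x"
  by (simp add: mix_def algebra_simps)

lemma mix_swap: "mix a x y = mix (1 - a) y x"
  by (simp add: mix_def algebra_simps)

lemma mix_mix_left: "mix a (mix c s q) r = mix c (mix a s r) (mix a q r)"
  by (rule ext) (simp add: mix_def algebra_simps)

definition EU :: "('p form \<Rightarrow> real) \<Rightarrow> 'p bet \<Rightarrow> real" where
  "EU f b = (\<Sum>\<phi>\<in>supp b. b \<phi> * f \<phi>)"

lemma EU_eq_sum_superset: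
  assumes "b \<in> bets" "finite S" "supp b \<subseteq> S"
  shows "EU f b = (\<Sum>\<phi>\<in>S. b \<phi> * f \<phi>)"
  unfolding EU_def using assms bet_eq_0_outside_supp[OF assms(1)]
  by (intro sum.mono_neutral_left) auto

lemma EU_one: "b \<in> bets \<Longrightarrow> EU (\<lambda>_. 1) b = 1"
  by (simp add: EU_def sum_supp_bet)

lemma EU_prim [simp]: "EU f (prim \<phi>) = f \<phi>"
  unfolding EU_def supp_prim by (simp add: prim_def)

lemma EU_mix_sum:
  assumes b: "b \<in> bets" and b': "b' \<in> bets"
  defines "S \<equiv> supp b \<union> supp b'"
  shows "(\<Sum>\<phi>\<in>S. mix a b b' \<phi> * f \<phi>) = a * EU f b + (1 - a) * EU f b'"
proof -
  have "finite S" using finite_supp_bet[OF b] finite_supp_bet[OF b'] by (simp add: S_def)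
  have "(\<Sum>\<phi>\<in>S. mix a b b' \<phi> * f \<phi>)
      = a * (\<Sum>\<phi>\<in>S. b \<phi> * f \<phi>) + (1 - a) * (\<Sum>\<phi>\<in>S. b' \<phi> * f \<phi>)"
    by (simp add: mix_def sum.distrib sum_distrib_left algebra_simps sum_subtractf)
  also have "\<dots> = a * EU f b + (1 - a) * EU f b'"
    using EU_eq_sum_superset[OF b \<open>finite S\<close>] EU_eq_sum_superset[OF b' \<open>finite S\<close>]
    by (simp add: S_def)
  finally show ?thesis .
qed

lemma mix_in_bets:
  assumes a: "0 \<le> a" "a \<le> 1" and b: "b \<in> bets" and b': "b' \<in> bets"
  shows "mix a b b' \<in> bets"
proof -
  let ?S = "supp b \<union> supp b'"
  have S: "finite ?S" "supp (mix a b b') \<subseteq> ?S"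
    using finite_supp_bet[OF b] finite_supp_bet[OF b'] supp_mix_subset[OF b b'] by auto
  have nonneg: "0 \<le> mix a b b' \<phi>" for \<phi>
    using a bet_nonneg[OF b, of \<phi>] bet_nonneg[OF b', of \<phi>] by (simp add: mix_def)
  have le_1: "mix a b b' \<phi> \<le> 1" for \<phi>
    using a bet_le_1[OF b, of \<phi>] bet_le_1[OF b', of \<phi>] convex_bound_le[of "b \<phi>" 1 "b' \<phi>" a "1 - a"]
    by (simp add: mix_def)
  have "sum (mix a b b') (supp (mix a b b')) = sum (mix a b b') ?S"
    using S nonneg by (intro sum.mono_neutral_left) (auto simp: supp_def less_le)
  also have "\<dots> = 1"
    using EU_mix_sum[OF b b', of a "\<lambda>_. 1"] EU_one[OF b] EU_one[OF b'] by simp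
  finally show ?thesis
    using nonneg le_1 S by (auto simp: bets_def is_bet_def intro: finite_subset)
qed

lemma EU_mix:
  assumes "0 \<le> a" "a \<le> 1" and b: "b \<in> bets" and b': "b' \<in> bets"
  shows "EU f (mix a b b') = a * EU f b + (1 - a) * EU f b'"
  using EU_eq_sum_superset[OF mix_in_bets[OF assms] _ supp_mix_subset[OF b b']]
    EU_mix_sum[OF b b'] finite_supp_bet[OF b] finite_supp_bet[OF b'] by simp

lemma EU_bounds:
  assumes b: "b \<in> bets" and f: "\<And>\<phi>. 0 \<le> f \<phi> \<and> f \<phi> \<le> 1"
  shows "0 \<le> EU f b" "EU f b \<le> 1"
proof -
  show "0 \<le> EU f b"
    unfolding EU_def using f bet_nonneg[OF b] by (intro sum_nonneg) auto
  have "EU f b \<le> EU (\<lambda>_. 1) b"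
    unfolding EU_def using f bet_nonneg[OF b] by (intro sum_mono) (simp add: mult_left_le)
  then show "EU f b \<le> 1" using EU_one[OF b] by simp
qed

lemma bet_decompose:
  assumes b: "b \<in> bets" and supp: "supp b = insert x F" and "x \<notin> F" "F \<noteq> {}"
  obtains p c where "c \<in> bets" "supp c = F" "b = mix p (prim x) c" "0 < p" "p < 1"
proof -
  define p where "p = b x"
  have fin: "finite F" using finite_supp_bet[OF b] supp by simp
  have sum_F: "p + sum b F = 1" using sum_supp_bet[OF b] supp fin \<open>x \<notin> F\<close> by (simp add: p_def)
  have p_pos: "0 < p" using supp by (auto simp: p_def supp_def)
  obtain y where "y \<in> F" using \<open>F \<noteq> {}\<close> by blast
  then have "0 < b y" "b y \<le> sum b F"
    using supp fin bet_nonneg[OF b] by (auto simp: supp_def intro: member_le_sum)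
  then have p_lt_1: "p < 1" using sum_F by linarith
  define c where "c = (\<lambda>\<psi>. if \<psi> = x then 0 else b \<psi> / (1 - p))"
  have supp_c: "supp c = F"
    using p_lt_1 supp \<open>x \<notin> F\<close> by (auto simp: supp_def c_def zero_less_divide_iff)
  have "sum c F = sum b F / (1 - p)"
    using \<open>x \<notin> F\<close> by (auto simp: c_def sum_divide_distrib intro!: sum.cong)
  then have sum_c: "sum c F = 1" using sum_F p_lt_1 by simp
  have c_nonneg: "0 \<le> c \<psi>" for \<psi> using bet_nonneg[OF b] p_lt_1 by (simp add: c_def)
  have "c \<psi> \<le> 1" for \<psi>
  proof (cases "\<psi> \<in> F")
    case True
    then show ?thesis using member_le_sum[OF True _ fin, of c] c_nonneg sum_c by simp
  next
    case False
    then show ?thesis using supp_c c_nonneg by (auto simp: supp_def not_less)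
  qed
  then have "c \<in> bets" using c_nonneg supp_c fin sum_c by (simp add: bets_def is_bet_def)
  moreover have "b = mix p (prim x) c"
    using p_lt_1 by (auto simp: mix_def prim_def c_def p_def)
  ultimately show ?thesis using that supp_c p_pos p_lt_1 by blast
qed

section \<open>Preferences represented by expected utility\<close>

lemma archimedean_if_EU_represents:
  fixes R :: "'p bet \<Rightarrow> 'p bet \<Rightarrow> bool"
  assumes rep: "\<And>b b'. b \<in> bets \<Longrightarrow> b' \<in> bets \<Longrightarrow> R b b' \<longleftrightarrow> EU f b' \<le> EU f b"
  shows "archimedean R"
  unfolding archimedean_def
proof (intro ballI impI)
  fix b b' b'' :: "'p bet" assume bets: "b \<in> bets" "b' \<in> bets" "b'' \<in> bets"
    and "strict R b b' \<and> strict R b' b''"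
  have strict_iff: "strict R c c' \<longleftrightarrow> EU f c' < EU f c" if "c \<in> bets" "c' \<in> bets" for c c'
    using rep[OF that] rep[OF that(2,1)] by (auto simp: strict_def)
  have xy: "EU f b' < EU f b" and yz: "EU f b'' < EU f b'"
    using \<open>strict R b b' \<and> strict R b' b''\<close> bets by (auto simp: strict_iff)
  define q where "q = (EU f b' - EU f b'') / (EU f b - EU f b'')"
  have q: "0 < q" "q < 1" "q * (EU f b - EU f b'') = EU f b' - EU f b''"
    using xy yz by (auto simp: q_def field_simps)
  have EU_mix_bb'': "EU f (mix a b b'') = EU f b'' + a * (EU f b - EU f b'')" if "a \<in> {0<..<1}" for a
    using EU_mix[of a b b'' f] that bets by (simp add: algebra_simps)
  have mix_in: "mix a b b'' \<in> bets" if "a \<in> {0<..<1}" for a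
    using that bets by (simp add: mix_in_bets)
  \<comment> \<open>The weight \<open>q\<close> reproduces \<open>EU f b'\<close> exactly; halving the distance to 0 or to 1 gives strict bounds.\<close>
  have in01: "q / 2 \<in> {0<..<1}" "(1 + q) / 2 \<in> {0<..<1}" using q by auto
  have "EU f (mix (q / 2) b b'') < EU f b'"
    using EU_mix_bb''[OF in01(1)] q(3) yz by (simp add: field_simps)
  then have "strict R b' (mix (q / 2) b b'')" using strict_iff[OF bets(2) mix_in] in01 by blast
  moreover have "EU f b' < EU f (mix ((1 + q) / 2) b b'')"
    using EU_mix_bb''[OF in01(2)] q(3) xy by (simp add: field_simps)
  then have "strict R (mix ((1 + q) / 2) b b'') b'" using strict_iff[OF mix_in bets(2)] in01 by blast
  ultimately show "\<exists>\<alpha>\<in>{0<..<1}. \<exists>\<beta>\<in>{0<..<1}. strict R (mix \<alpha> b b'') b' \<and> strict R b' (mix \<beta> b b'')"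
    using in01 by blast
qed

lemma independence_if_EU_represents:
  fixes R :: "'p bet \<Rightarrow> 'p bet \<Rightarrow> bool"
  assumes rep: "\<And>b b'. b \<in> bets \<Longrightarrow> b' \<in> bets \<Longrightarrow> R b b' \<longleftrightarrow> EU f b' \<le> EU f b"
  shows "independence R"
  unfolding independence_def
proof (intro ballI impI)
  fix b b' b'' :: "'p bet" and \<alpha> :: real assume bets: "b \<in> bets" "b' \<in> bets" "b'' \<in> bets"
    and \<alpha>: "\<alpha> \<in> {0<..1}" and "strict R b b'"
  then have "EU f b' < EU f b" using rep by (auto simp: strict_def)
  then have "\<alpha> * EU f b' + (1 - \<alpha>) * EU f b'' < \<alpha> * EU f b + (1 - \<alpha>) * EU f b''"
    using \<alpha> by simp
  then show "strict R (mix \<alpha> b b'') (mix \<alpha> b' b'')"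
    using \<alpha> bets by (simp add: strict_def rep mix_in_bets EU_mix)
qed

lemma objective_EU_if_EU_represents:
  fixes R :: "'p bet \<Rightarrow> 'p bet \<Rightarrow> bool"
  assumes rep: "\<And>b b'. b \<in> bets \<Longrightarrow> b' \<in> bets \<Longrightarrow> R b b' \<longleftrightarrow> EU f b' \<le> EU f b"
  shows "objective_EU R"
proof -
  have "complete_on_bets R" "transitive_on_bets R"
    unfolding complete_on_bets_def transitive_on_bets_def using rep by force+
  then show ?thesis
    using archimedean_if_EU_represents[OF rep] independence_if_EU_represents[OF rep]
    by (simp add: objective_EU_def)
qed

lemma non_triviality_objective_EU_if_represents:
  assumes model: "subjective_model tT tF \<Omega> t \<Sigma> lk" and "represents t lk R"
  shows "non_triviality tT tF R \<and> objective_EU R"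
proof -
  have rep: "R b b' \<longleftrightarrow> EU (lk \<circ> t) b' \<le> EU (lk \<circ> t) b" if "b \<in> bets" "b' \<in> bets" for b b'
    using \<open>represents t lk R\<close> that by (simp add: represents_def EU_def)
  have "t \<phi> \<in> \<Sigma>" for \<phi> using model by (auto simp: subjective_model_def)
  then have "0 \<le> lk (t \<phi>)" "lk (t \<phi>) \<le> 1" "lk (t (Prop tT)) = 1" "lk (t (Prop tF)) = 0" for \<phi>
    using model by (auto simp: subjective_model_def likelihood_appraisal_def truth_valuation_def)
  then have "non_triviality tT tF R"
    by (simp add: non_triviality_def strict_def rep)
  then show ?thesis using objective_EU_if_EU_represents[OF rep] by blast
qed

section \<open>A Lebesgue model\<close>

lemma additive_on_restrict_lborel:
  assumes "\<Omega> \<in> sets lborel" "emeasure lborel \<Omega> < \<infinity>"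
  shows "additive_on (sets (restrict_space lborel \<Omega>)) (measure lborel)"
  unfolding additive_on_def
proof (intro ballI impI)
  fix A B assume A: "A \<in> sets (restrict_space lborel \<Omega>)" and B: "B \<in> sets (restrict_space lborel \<Omega>)"
    and "A \<inter> B = {}"
  have fin: "emeasure lborel C \<noteq> \<infinity>" if "C \<in> sets (restrict_space lborel \<Omega>)" for C
    using that assms emeasure_mono[of C \<Omega> lborel]
    by (auto simp: sets_restrict_space_iff top_unique)
  show "measure lborel (A \<union> B) = measure lborel A + measure lborel B"
    using measure_Union[OF fin[OF A] fin[OF B] _ _ \<open>A \<inter> B = {}\<close>] A B assms
    by (auto simp: sets_restrict_space_iff)
qed

lemma likelihood_appraisal_lborel_unit_interval:
  "likelihood_appraisal {0..<1} (sets (restrict_space lborel {0..<1::real})) (measure lborel)"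
  unfolding likelihood_appraisal_def
proof (intro conjI ballI)
  fix A assume "A \<in> sets (restrict_space lborel {0..<1::real})"
  then have "measure lborel A \<le> measure lborel {0..<1::real}"
    by (intro measure_mono_fmeasurable) (auto simp: sets_restrict_space_iff fmeasurable_def)
  then show "measure lborel A \<le> 1" by simp
qed auto

lemma additive_rep_if_EU_represents:
  assumes u: "\<And>\<phi>. 0 \<le> u \<phi> \<and> u \<phi> \<le> 1" "u (Prop tT) = 1" "u (Prop tF) = 0"
    and rep: "\<And>b b'. b \<in> bets \<Longrightarrow> b' \<in> bets \<Longrightarrow> R b b' \<longleftrightarrow> EU u b' \<le> EU u b"
  shows "additive_subjective_rep tT tF {0..<1::real} R"
proof -
  let ?\<Sigma> = "sets (restrict_space lborel {0..<1::real})"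
  \<comment> \<open>A proposition is true at the states below its utility, so its likelihood is that utility.\<close>
  let ?t = "\<lambda>\<phi>. {0..<u \<phi>}"
  have "algebra {0..<1} ?\<Sigma>"
    using sets.sigma_algebra_axioms[of "restrict_space lborel {0..<1::real}"]
    by (simp add: space_restrict_space sigma_algebra.axioms(1))
  moreover have "truth_valuation tT tF {0..<1} ?t" "range ?t \<subseteq> ?\<Sigma>"
    using u by (auto simp: truth_valuation_def sets_restrict_space_iff)
  moreover have "represents ?t (measure lborel) R"
    using u(1) by (simp add: represents_def rep EU_def)
  ultimately show ?thesis
    using likelihood_appraisal_lborel_unit_interval additive_on_restrict_lborel[of "{0..<1::real}"]
    by (auto simp: additive_subjective_rep_def subjective_model_def)
qed

section \<open>Calibration by standard bets\<close>

locale vnm_preference =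
  fixes R :: "'p bet \<Rightarrow> 'p bet \<Rightarrow> bool" (infix "\<succeq>" 50) and tT tF :: 'p
  assumes non_trivial: "non_triviality tT tF (\<succeq>)" and objective_EU: "objective_EU (\<succeq>)"
begin

abbreviation strict_pref :: "'p bet \<Rightarrow> 'p bet \<Rightarrow> bool" (infix "\<succ>" 50)
  where "x \<succ> y \<equiv> strict (\<succeq>) x y"

abbreviation indiff :: "'p bet \<Rightarrow> 'p bet \<Rightarrow> bool" (infix "\<simeq>" 50)
  where "x \<simeq> y \<equiv> x \<succeq> y \<and> y \<succeq> x"

abbreviation "betT \<equiv> prim (Prop tT)"
abbreviation "betF \<equiv> prim (Prop tF)"

lemma complete: "x \<in> bets \<Longrightarrow> y \<in> bets \<Longrightarrow> x \<succeq> y \<or> y \<succeq> x"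
  using objective_EU unfolding objective_EU_def complete_on_bets_def by blast

lemma refl: "x \<in> bets \<Longrightarrow> x \<succeq> x"
  using complete by blast

lemma trans: "x \<in> bets \<Longrightarrow> y \<in> bets \<Longrightarrow> z \<in> bets \<Longrightarrow> x \<succeq> y \<Longrightarrow> y \<succeq> z \<Longrightarrow> x \<succeq> z"
  using objective_EU unfolding objective_EU_def transitive_on_bets_def by blast

lemma independence:
  "x \<in> bets \<Longrightarrow> y \<in> bets \<Longrightarrow> z \<in> bets \<Longrightarrow> 0 < a \<Longrightarrow> a \<le> 1 \<Longrightarrow> x \<succ> y
    \<Longrightarrow> mix a x z \<succ> mix a y z"
  using objective_EU by (auto simp: objective_EU_def independence_def)

lemma archimedean:
  "x \<in> bets \<Longrightarrow> y \<in> bets \<Longrightarrow> z \<in> bets \<Longrightarrow> x \<succ> y \<Longrightarrow> y \<succ> z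
    \<Longrightarrow> \<exists>a\<in>{0<..<1}. \<exists>c\<in>{0<..<1}. mix a x z \<succ> y \<and> y \<succ> mix c x z"
  using objective_EU unfolding objective_EU_def archimedean_def by blast

lemma strict_weak_trans: "x \<in> bets \<Longrightarrow> y \<in> bets \<Longrightarrow> z \<in> bets \<Longrightarrow> x \<succ> y \<Longrightarrow> y \<succeq> z \<Longrightarrow> x \<succ> z"
  and weak_strict_trans: "x \<in> bets \<Longrightarrow> y \<in> bets \<Longrightarrow> z \<in> bets \<Longrightarrow> x \<succeq> y \<Longrightarrow> y \<succ> z \<Longrightarrow> x \<succ> z"
  unfolding strict_def using trans by blast+

lemma strict_trans: "x \<in> bets \<Longrightarrow> y \<in> bets \<Longrightarrow> z \<in> bets \<Longrightarrow> x \<succ> y \<Longrightarrow> y \<succ> z \<Longrightarrow> x \<succ> z"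
  using strict_weak_trans unfolding strict_def by blast

lemma strict_if_not_weak: "x \<in> bets \<Longrightarrow> y \<in> bets \<Longrightarrow> \<not> x \<succeq> y \<Longrightarrow> y \<succ> x"
  unfolding strict_def using complete by blast

lemma weak_if_not_strict: "x \<in> bets \<Longrightarrow> y \<in> bets \<Longrightarrow> \<not> x \<succ> y \<Longrightarrow> y \<succeq> x"
  unfolding strict_def using complete by blast

lemma indiff_trans: "x \<in> bets \<Longrightarrow> y \<in> bets \<Longrightarrow> z \<in> bets \<Longrightarrow> x \<simeq> y \<Longrightarrow> y \<simeq> z \<Longrightarrow> x \<simeq> z"
  using trans by blast

lemma betT_strict_betF: "betT \<succ> betF"
  using non_trivial by (simp add: non_triviality_def)

lemma exists_strictly_comparable:
  assumes p: "p \<in> bets"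
  obtains s where "s \<in> bets" "s \<succ> p \<or> p \<succ> s"
proof (cases "betT \<succ> p")
  case False
  then have "p \<succeq> betT" using weak_if_not_strict[OF prim_in_bets p] by blast
  then have "p \<succ> betF" using weak_strict_trans[OF p prim_in_bets prim_in_bets _ betT_strict_betF] by blast
  then show ?thesis using that prim_in_bets by blast
qed (use that prim_in_bets in blast)

lemma mix_weak_subst_of_better:
  assumes bets: "p \<in> bets" "q \<in> bets" "r \<in> bets" "s \<in> bets" and a: "0 < a" "a \<le> 1"
    and "s \<succ> p" "p \<succeq> q"
  shows "mix a p r \<succeq> mix a q r"
proof (rule ccontr)
  have mixes: "mix a p r \<in> bets" "mix a q r \<in> bets" "mix a s r \<in> bets"
    using bets a by (simp_all add: mix_in_bets)
  assume "\<not> mix a p r \<succeq> mix a q r"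
  then have worse: "mix a q r \<succ> mix a p r"
    using strict_if_not_weak mixes by blast
  have "mix a s r \<succ> mix a q r"
    using independence[OF bets(4,2,3) a strict_weak_trans[OF bets(4,1,2) \<open>s \<succ> p\<close> \<open>p \<succeq> q\<close>]] .
  then obtain c where c: "c \<in> {0<..<1}" and below: "mix a q r \<succ> mix c (mix a s r) (mix a p r)"
    using archimedean[OF mixes(3,2,1) _ worse] by blast
  have csp: "mix c s p \<in> bets" using bets c by (simp add: mix_in_bets)
  \<comment> \<open>Yet independence puts the same mixture above \<open>mix a q r\<close>.\<close>
  have "mix c s p \<succ> mix c p p"
    using independence[OF bets(4,1,1) _ _ \<open>s \<succ> p\<close>] c by simp
  then have "mix c s p \<succ> q"
    using strict_weak_trans[OF csp bets(1,2) _ \<open>p \<succeq> q\<close>] by simp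
  then have "mix a (mix c s p) r \<succ> mix a q r"
    using independence[OF csp bets(2,3) a] by simp
  moreover have "mix c (mix a s r) (mix a p r) = mix a (mix c s p) r"
    by (rule mix_mix_left[symmetric])
  ultimately show False
    using below by (simp add: strict_def)
qed

lemma mix_weak_subst_of_worse:
  assumes bets: "p \<in> bets" "q \<in> bets" "r \<in> bets" "s \<in> bets" and a: "0 < a" "a \<le> 1"
    and "p \<succ> s" "p \<simeq> q"
  shows "mix a p r \<succeq> mix a q r"
proof (rule ccontr)
  have mixes: "mix a p r \<in> bets" "mix a q r \<in> bets" "mix a s r \<in> bets"
    using bets a by (simp_all add: mix_in_bets)
  assume "\<not> mix a p r \<succeq> mix a q r"
  then have worse: "mix a q r \<succ> mix a p r"
    using strict_if_not_weak mixes by blast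
  have "mix a p r \<succ> mix a s r"
    using independence[OF bets(1,4,3) a \<open>p \<succ> s\<close>] .
  then obtain c where c: "c \<in> {0<..<1}" and above: "mix c (mix a q r) (mix a s r) \<succ> mix a p r"
    using archimedean[OF mixes(2,1,3) worse] by blast
  have cqs: "mix c q s \<in> bets" using bets c by (simp add: mix_in_bets)
  have "mix (1 - c) q q \<succ> mix (1 - c) s q"
    using independence[OF bets(2,4,2) _ _ weak_strict_trans[OF bets(2,1,4) _ \<open>p \<succ> s\<close>]]
      \<open>p \<simeq> q\<close> c by simp
  then have "q \<succ> mix c q s"
    by (simp add: mix_swap[of "1 - c" s q])
  then have "p \<succ> mix c q s"
    using weak_strict_trans[OF bets(1,2) cqs] \<open>p \<simeq> q\<close> by blast
  then have "mix a p r \<succ> mix a (mix c q s) r"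
    using independence[OF bets(1) cqs bets(3) a] by simp
  moreover have "mix c (mix a q r) (mix a s r) = mix a (mix c q s) r"
    by (rule mix_mix_left[symmetric])
  ultimately show False
    using above by (simp add: strict_def)
qed

lemma mix_weak_subst:
  assumes "p \<in> bets" "q \<in> bets" "r \<in> bets" "0 < a" "a \<le> 1" "p \<simeq> q"
  shows "mix a p r \<succeq> mix a q r"
proof -
  obtain s where "s \<in> bets" "s \<succ> p \<or> p \<succ> s"
    using exists_strictly_comparable[OF \<open>p \<in> bets\<close>] by blast
  then show ?thesis
    using mix_weak_subst_of_better mix_weak_subst_of_worse assms by blast
qed

lemma mix_indiff_subst:
  "p \<in> bets \<Longrightarrow> q \<in> bets \<Longrightarrow> r \<in> bets \<Longrightarrow> 0 < a \<Longrightarrow> a \<le> 1 \<Longrightarrow> p \<simeq> q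
    \<Longrightarrow> mix a p r \<simeq> mix a q r"
  using mix_weak_subst by blast

definition std_bet :: "real \<Rightarrow> 'p bet" where
  "std_bet \<alpha> = mix \<alpha> betT betF"

lemma std_bet_in_bets: "0 \<le> \<alpha> \<Longrightarrow> \<alpha> \<le> 1 \<Longrightarrow> std_bet \<alpha> \<in> bets"
  by (simp add: std_bet_def mix_in_bets)

lemma mix_std_bet: "mix c (std_bet \<alpha>) (std_bet \<beta>) = std_bet (c * \<alpha> + (1 - c) * \<beta>)"
  by (rule ext) (simp add: std_bet_def mix_def algebra_simps)

lemma std_bet_1 [simp]: "std_bet 1 = betT"
  and std_bet_0 [simp]: "std_bet 0 = betF"
  by (simp_all add: std_bet_def mix_def)

lemma std_bet_strict_mono:
  assumes "0 \<le> \<beta>" "\<beta> < \<alpha>" "\<alpha> \<le> 1"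
  shows "std_bet \<alpha> \<succ> std_bet \<beta>"
proof -
  have "mix (1 - \<beta>) betT betT \<succ> mix (1 - \<beta>) betF betT"
    using independence[OF prim_in_bets prim_in_bets prim_in_bets[of "Prop tT"] _ _ betT_strict_betF] assms
    by simp
  moreover have "mix (1 - \<beta>) betF betT = std_bet \<beta>"
    unfolding std_bet_def by (rule mix_swap[symmetric])
  ultimately have top: "std_bet 1 \<succ> std_bet \<beta>"
    by simp
  define l where "l = (\<alpha> - \<beta>) / (1 - \<beta>)"
  have l: "0 < l" "l \<le> 1"
    using assms by (auto simp: l_def field_simps)
  have "l * (1 - \<beta>) = \<alpha> - \<beta>"
    using assms by (simp add: l_def)
  then have l_comb: "l * 1 + (1 - l) * \<beta> = \<alpha>"
    by (simp add: algebra_simps)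
  have "mix l (std_bet 1) (std_bet \<beta>) \<succ> mix l (std_bet \<beta>) (std_bet \<beta>)"
    using independence[OF std_bet_in_bets[of 1] std_bet_in_bets[of \<beta>] std_bet_in_bets[of \<beta>] l top] assms
    by simp
  then show ?thesis
    by (simp only: mix_std_bet l_comb mix_same)
qed

lemma std_bet_mono: "0 \<le> \<beta> \<Longrightarrow> \<beta> \<le> \<alpha> \<Longrightarrow> \<alpha> \<le> 1 \<Longrightarrow> std_bet \<alpha> \<succeq> std_bet \<beta>"
  using std_bet_strict_mono[of \<beta> \<alpha>] refl[OF std_bet_in_bets, of \<alpha>]
  by (cases "\<beta> = \<alpha>") (auto simp: strict_def)

lemma std_bet_indiff_imp_eq:
  assumes "\<alpha> \<in> {0..1}" "\<beta> \<in> {0..1}" "std_bet \<alpha> \<simeq> std_bet \<beta>"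
  shows "\<alpha> = \<beta>"
  using std_bet_strict_mono[of \<alpha> \<beta>] std_bet_strict_mono[of \<beta> \<alpha>] assms
  by (cases \<alpha> \<beta> rule: linorder_cases) (auto simp: strict_def)

lemma std_bet_strict_above_open:
  assumes b: "b \<in> bets" and "betT \<succ> b" and \<alpha>: "0 \<le> \<alpha>" "\<alpha> \<le> 1" and "b \<succ> std_bet \<alpha>"
  obtains \<gamma> where "\<alpha> < \<gamma>" "\<gamma> \<le> 1" "b \<succ> std_bet \<gamma>"
proof -
  have "\<alpha> \<noteq> 1"
    using \<open>betT \<succ> b\<close> \<open>b \<succ> std_bet \<alpha>\<close> by (auto simp: strict_def)
  obtain c where c: "c \<in> {0<..<1}" and "b \<succ> mix c betT (std_bet \<alpha>)"
    using archimedean[OF prim_in_bets b std_bet_in_bets[OF \<alpha>]] assms by blast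
  moreover have "mix c betT (std_bet \<alpha>) = std_bet (c * 1 + (1 - c) * \<alpha>)"
    using mix_std_bet[of c 1 \<alpha>] by simp
  ultimately have "b \<succ> std_bet (c * 1 + (1 - c) * \<alpha>)"
    by simp
  moreover have "\<alpha> < c * 1 + (1 - c) * \<alpha>" "c * 1 + (1 - c) * \<alpha> \<le> 1"
    using c \<alpha> \<open>\<alpha> \<noteq> 1\<close> convex_bound_le[of 1 1 \<alpha> c "1 - c"] by (auto simp: algebra_simps)
  ultimately show ?thesis using that by blast
qed

lemma std_bet_strict_below_open:
  assumes b: "b \<in> bets" and "b \<succ> betF" and \<alpha>: "0 \<le> \<alpha>" "\<alpha> \<le> 1" and "std_bet \<alpha> \<succ> b"
  obtains \<gamma> where "0 \<le> \<gamma>" "\<gamma> < \<alpha>" "std_bet \<gamma> \<succ> b"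
proof -
  have "\<alpha> \<noteq> 0"
    using \<open>b \<succ> betF\<close> \<open>std_bet \<alpha> \<succ> b\<close> by (auto simp: strict_def)
  obtain c where c: "c \<in> {0<..<1}" and "mix c (std_bet \<alpha>) betF \<succ> b"
    using archimedean[OF std_bet_in_bets[OF \<alpha>] b prim_in_bets] assms by blast
  moreover have "mix c (std_bet \<alpha>) betF = std_bet (c * \<alpha>)"
    using mix_std_bet[of c \<alpha> 0] by simp
  ultimately have "std_bet (c * \<alpha>) \<succ> b"
    by simp
  moreover have "0 \<le> c * \<alpha>" "c * \<alpha> < \<alpha>"
    using c \<alpha> \<open>\<alpha> \<noteq> 0\<close> by auto
  ultimately show ?thesis using that by simp
qed

lemma exists_indiff_std_bet:
  assumes b: "b \<in> bets" and "betT \<succeq> b" "b \<succeq> betF"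
  shows "\<exists>\<alpha>\<in>{0..1}. b \<simeq> std_bet \<alpha>"
proof -
  consider "b \<succeq> betT" | "betF \<succeq> b" | "betT \<succ> b" "b \<succ> betF"
    using assms by (auto simp: strict_def)
  then show ?thesis
  proof cases
    case 1
    then show ?thesis using \<open>betT \<succeq> b\<close> by (intro bexI[of _ 1]) auto
  next
    case 2
    then show ?thesis using \<open>b \<succeq> betF\<close> by (intro bexI[of _ 0]) auto
  next
    case 3
    define S where "S = {\<gamma>\<in>{0..1}. b \<succ> std_bet \<gamma>}"
    have "0 \<in> S" using \<open>b \<succ> betF\<close> by (simp add: S_def)
    have bdd: "bdd_above S"
      unfolding S_def by (rule bdd_aboveI[of _ 1]) simp
    have "Sup S \<le> 1"
      using \<open>0 \<in> S\<close> by (intro cSup_least) (blast, simp add: S_def)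
    then have \<alpha>: "0 \<le> Sup S" "Sup S \<le> 1"
      using cSup_upper[OF \<open>0 \<in> S\<close> bdd] by simp_all
    have "std_bet (Sup S) \<succeq> b"
    proof (rule ccontr)
      assume "\<not> std_bet (Sup S) \<succeq> b"
      then have "b \<succ> std_bet (Sup S)" using strict_if_not_weak[OF std_bet_in_bets[OF \<alpha>] b] by blast
      then obtain \<gamma> where "Sup S < \<gamma>" "\<gamma> \<le> 1" "b \<succ> std_bet \<gamma>"
        using std_bet_strict_above_open[OF b \<open>betT \<succ> b\<close> \<alpha>] by blast
      then have "\<gamma> \<in> S" using \<alpha> by (simp add: S_def)
      then show False using cSup_upper[OF _ bdd] \<open>Sup S < \<gamma>\<close> by force
    qed
    moreover have "b \<succeq> std_bet (Sup S)"
    proof (rule ccontr)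
      assume "\<not> b \<succeq> std_bet (Sup S)"
      then have "std_bet (Sup S) \<succ> b" using strict_if_not_weak[OF b std_bet_in_bets[OF \<alpha>]] by blast
      then obtain \<gamma> where \<gamma>: "0 \<le> \<gamma>" "\<gamma> < Sup S" "std_bet \<gamma> \<succ> b"
        using std_bet_strict_below_open[OF b \<open>b \<succ> betF\<close> \<alpha>] by blast
      then obtain \<gamma>' where "\<gamma>' \<in> S" "\<gamma> < \<gamma>'"
        using less_cSup_iff[OF _ bdd] \<open>0 \<in> S\<close> by blast
      then have "\<gamma>' \<le> 1" "b \<succ> std_bet \<gamma>'" "std_bet \<gamma>' \<succ> std_bet \<gamma>"
        using std_bet_strict_mono[of \<gamma> \<gamma>'] \<gamma> by (simp_all add: S_def)
      moreover have "0 \<le> \<gamma>'" "\<gamma> \<le> 1" using \<gamma>(1) \<open>\<gamma> < \<gamma>'\<close> \<open>\<gamma>' \<le> 1\<close> by linarith+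
      ultimately have "b \<succ> std_bet \<gamma>"
        using strict_trans[OF b std_bet_in_bets[of \<gamma>'] std_bet_in_bets[of \<gamma>]] \<gamma>(1) by blast
      then show False using \<gamma>(3) by (simp add: strict_def)
    qed
    ultimately show ?thesis using \<alpha> by auto
  qed
qed

definition utility :: "'p form \<Rightarrow> real" where
  "utility \<phi> = (SOME \<alpha>. \<alpha> \<in> {0..1} \<and> prim \<phi> \<simeq> std_bet \<alpha>)"

lemma utility_calibrates: "utility \<phi> \<in> {0..1} \<and> prim \<phi> \<simeq> std_bet (utility \<phi>)"
proof -
  have "betT \<succeq> prim \<phi>" "prim \<phi> \<succeq> betF"
    using non_trivial by (auto simp: non_triviality_def)
  then have "\<exists>\<alpha>. \<alpha> \<in> {0..1} \<and> prim \<phi> \<simeq> std_bet \<alpha>"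
    using exists_indiff_std_bet[OF prim_in_bets] by blast
  then show ?thesis
    unfolding utility_def by (rule someI_ex)
qed

lemma utility_bounds: "0 \<le> utility \<phi> \<and> utility \<phi> \<le> 1"
  using utility_calibrates by simp

lemma utility_T: "utility (Prop tT) = 1"
  using utility_calibrates[of "Prop tT"] std_bet_indiff_imp_eq[of 1 "utility (Prop tT)"] by simp

lemma utility_F: "utility (Prop tF) = 0"
  using utility_calibrates[of "Prop tF"] std_bet_indiff_imp_eq[of 0 "utility (Prop tF)"] by simp

lemma EU_utility_bounds: "b \<in> bets \<Longrightarrow> EU utility b \<in> {0..1}"
  using EU_bounds[of b utility] utility_bounds by simp

lemma indiff_std_bet_EU_utility_mix_prim:
  assumes c: "c \<in> bets" "c \<simeq> std_bet (EU utility c)" and p: "0 < p" "p < 1"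
  shows "mix p (prim x) c \<simeq> std_bet (EU utility (mix p (prim x) c))"
proof -
  let ?ux = "std_bet (utility x)" and ?uc = "std_bet (EU utility c)"
  have EU_b: "EU utility (mix p (prim x) c) = p * utility x + (1 - p) * EU utility c"
    using EU_mix[of p "prim x" c utility] p c by simp
  have in_bets: "?ux \<in> bets" "?uc \<in> bets" "mix p (prim x) c \<in> bets" "mix (1 - p) c ?ux \<in> bets"
    "std_bet (EU utility (mix p (prim x) c)) \<in> bets"
    using utility_bounds EU_utility_bounds c p by (simp_all add: std_bet_in_bets mix_in_bets)
  \<comment> \<open>Replace \<open>prim x\<close> and then \<open>c\<close> by their calibrating standard bets.\<close>
  have "mix p (prim x) c \<simeq> mix (1 - p) c ?ux"
    using mix_indiff_subst[OF prim_in_bets in_bets(1) c(1), of p] utility_calibrates p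
    by (simp add: mix_swap[of p ?ux c])
  moreover have "mix (1 - p) c ?ux \<simeq> std_bet (EU utility (mix p (prim x) c))"
    using mix_indiff_subst[OF c(1) in_bets(2,1), of "1 - p"] c p
    by (simp add: mix_std_bet EU_b algebra_simps)
  ultimately show ?thesis
    using indiff_trans[OF in_bets(3,4,5)] by blast
qed

lemma indiff_std_bet_EU_utility:
  assumes "b \<in> bets"
  shows "b \<simeq> std_bet (EU utility b)"
proof -
  have "\<forall>b\<in>bets. supp b = S \<longrightarrow> b \<simeq> std_bet (EU utility b)" if "finite S" for S
    using that
  proof (induction S rule: finite_induct)
    case empty
    show ?case using sum_supp_bet by (metis sum.empty zero_neq_one)
  next
    case (insert x F)
    show ?case
    proof (intro ballI impI)
      fix b assume b: "b \<in> bets" and supp: "supp b = insert x F"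
      show "b \<simeq> std_bet (EU utility b)"
      proof (cases "F = {}")
        case True
        then have "b = prim x" using bet_eq_prim_if_supp_singleton[OF b] supp by simp
        then show ?thesis using utility_calibrates[of x] by simp
      next
        case False
        then obtain p c where "c \<in> bets" "supp c = F" "b = mix p (prim x) c" "0 < p" "p < 1"
          using bet_decompose[OF b supp insert.hyps(2)] by blast
        then show ?thesis
          using indiff_std_bet_EU_utility_mix_prim[of c p x] insert.IH by blast
      qed
    qed
  qed
  then show ?thesis using assms finite_supp_bet by blast
qed

lemma EU_utility_represents:
  assumes b: "b \<in> bets" and b': "b' \<in> bets"
  shows "b \<succeq> b' \<longleftrightarrow> EU utility b' \<le> EU utility b"
proof -
  have std: "std_bet (EU utility b) \<in> bets" "std_bet (EU utility b') \<in> bets"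
    using EU_utility_bounds b b' by (simp_all add: std_bet_in_bets)
  have "b \<succeq> b' \<longleftrightarrow> std_bet (EU utility b) \<succeq> std_bet (EU utility b')"
    using trans[OF b] trans[OF std(1)] trans[OF b' std(1) b] trans[OF std(2) b' b]
      indiff_std_bet_EU_utility[OF b] indiff_std_bet_EU_utility[OF b'] b b' std
    by meson
  also have "\<dots> \<longleftrightarrow> EU utility b' \<le> EU utility b"
    using std_bet_mono[of "EU utility b'" "EU utility b"] std_bet_strict_mono[of "EU utility b" "EU utility b'"]
      EU_utility_bounds[OF b] EU_utility_bounds[OF b']
    by (auto simp: strict_def intro: leI)
  finally show ?thesis .
qed

end

lemma additive_rep_if_non_triviality_objective_EU:
  fixes R :: "'p bet \<Rightarrow> 'p bet \<Rightarrow> bool"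
  assumes "non_triviality tT tF R" "objective_EU R"
  shows "additive_subjective_rep tT tF {0..<1::real} R"
proof -
  interpret vnm_preference R tT tF
    using assms by unfold_locales
  show ?thesis
    by (rule additive_rep_if_EU_represents[OF utility_bounds utility_T utility_F EU_utility_represents])
qed

lemma non_triviality_objective_EU_if_additive_rep:
  assumes "additive_subjective_rep tT tF \<Omega> R"
  shows "non_triviality tT tF R \<and> objective_EU R"
proof -
  obtain t \<Sigma> lk where "subjective_model tT tF \<Omega> t \<Sigma> lk" "represents t lk R"
    using assms unfolding additive_subjective_rep_def by blast
  then show ?thesis by (rule non_triviality_objective_EU_if_represents)
qed

theorem proposition1:
  fixes tT tF :: 'p and R :: "'p bet \<Rightarrow> 'p bet \<Rightarrow> bool"
  shows "((non_triviality tT tF R \<and> objective_EU R)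
            \<longleftrightarrow> (\<exists>\<Omega> :: real set. additive_subjective_rep tT tF \<Omega> R))
         \<and> ((\<exists>\<Omega> :: 'w set. additive_subjective_rep tT tF \<Omega> R)
            \<longrightarrow> non_triviality tT tF R \<and> objective_EU R)"
proof -
  have "additive_subjective_rep tT tF {0..<1::real} R" if "non_triviality tT tF R \<and> objective_EU R"
    using that by (simp add: additive_rep_if_non_triviality_objective_EU)
  moreover have "non_triviality tT tF R \<and> objective_EU R"
    if "additive_subjective_rep tT tF \<Omega> R" for \<Omega> :: "real set"
    using that by (rule non_triviality_objective_EU_if_additive_rep)
  moreover have "non_triviality tT tF R \<and> objective_EU R"
    if "additive_subjective_rep tT tF \<Omega> R" for \<Omega> :: "'w set"
    using that by (rule non_triviality_objective_EU_if_additive_rep)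
  ultimately show ?thesis by blast
qed

end
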